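(* Let $A$ be a circular $m\times n$ matrix, $b\in\mathbb{Z}_+^m$, and let $\Gamma$ be a circuit in $D(A)$ with $p(\Gamma)>0$. Then the $\Gamma$-inequality $\sum_{j\in[n]}[p^-(\Gamma,j)+r(\Gamma,b)]x_j\ge r(\Gamma,b)(\beta(\Gamma,b)+1)+\sum_{i\in[m]:\bar a_i\in E(\Gamma)}b_i$ is valid for $Q^*(A,b)$.
   Context: Notation: $[n]=\{1,\dots,n\}$ with addition mod $n$ (index $0$ identified with $n$); for $a,c\in[n]$ with $t\ge0$ minimal such that $a+t\equiv c\pmod n$, $[a,c)_n=\{a,\dots,a+t-1\}$ (mod $n$). An $m\times n$ $\{0,1\}$-matrix $A$ is circular if for each row $i$ there are $\ell_i\in[n]$ and an integer $2\le k_i\le n-1$ such that row $i$ is the incidence vector of $[\ell_i,\ell_i+k_i)_n$. $Q(A,b)=\{x\in\mathbb{R}^n:Ax\ge b,x\ge0\}$, $Q^*(A,b)=\operatorname{conv}(Q(A,b)\cap\mathbb{Z}^n)$. $D(A)$: node set $[n]$ (labels mod $n$); forward row arcs $a_i=(\ell_i-1,\ell_i+k_i-1)$ ($i\in[m]$), forward short arcs $a_{m+j}=(j-1,j)$ ($j\in[n]$), reverse row arcs $\bar a_i=(\ell_i+k_i-1,\ell_i-1)$, reverse short arcs $\bar a_{m+j}=(j,j-1)$; lengths $k_i$, $1$, $-k_i$, $-1$ respectively. A circuit is a simple directed circuit; its winding number $p(\Gamma)$ satisfies $p(\Gamma)n=\sum_{a\in E(\Gamma)}l(a)$. A forward row arc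 $a_i$ jumps over $j$ iff $j\in[\ell_i,\ell_i+k_i)_n$; $(j-1,j)$ jumps over $j$ only; a reverse arc $\bar a_k$ jumps over $j$ iff $a_k$ does. $p^-(\Gamma,j)$ = number of reverse arcs of $\Gamma$ jumping over $j$. $t(\Gamma,b)=\sum_{i:a_i\in E(\Gamma)}b_i-\sum_{i:\bar a_i\in E(\Gamma)}b_i$, $\beta(\Gamma,b)=\lfloor t(\Gamma,b)/p(\Gamma)\rfloor$, $r(\Gamma,b)=t(\Gamma,b)-\beta(\Gamma,b)p(\Gamma)$. *)

theory Defs
  imports Complex_Main
begin

text \<open>A circular m x n matrix is given by its row data: row i (i in {1..m}) is the
incidence vector of the circular interval [l i, l i + k i)_n with l i in {1..n}
and 2 <= k i <= n - 1.  Column j in {1..n} lies in [a, a+k)_n iff (j - a) mod n < k.\<close>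

definition in_circ_interval :: "nat \<Rightarrow> int \<Rightarrow> int \<Rightarrow> int \<Rightarrow> bool" where
  "in_circ_interval n a k j \<longleftrightarrow> (j - a) mod int n < k"

definition circular_data :: "nat \<Rightarrow> nat \<Rightarrow> (nat \<Rightarrow> int) \<Rightarrow> (nat \<Rightarrow> int) \<Rightarrow> bool" where
  "circular_data m n l k \<longleftrightarrow>
     (\<forall>i\<in>{1..m}. 1 \<le> l i \<and> l i \<le> int n \<and> 2 \<le> k i \<and> k i \<le> int n - 1)"

definition circ_matrix :: "nat \<Rightarrow> (nat \<Rightarrow> int) \<Rightarrow> (nat \<Rightarrow> int) \<Rightarrow> nat \<Rightarrow> nat \<Rightarrow> int" where
  "circ_matrix n l k i j = (if in_circ_interval n (l i) (k i) (int j) then 1 else 0)"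

text \<open>Q(A,b) as a subset of R^n, vectors represented as functions nat => real
supported on {1..n}.\<close>

definition Qpoly :: "nat \<Rightarrow> nat \<Rightarrow> (nat \<Rightarrow> nat \<Rightarrow> int) \<Rightarrow> (nat \<Rightarrow> int) \<Rightarrow> (nat \<Rightarrow> real) set" where
  "Qpoly m n A b = {x. (\<forall>j. j \<notin> {1..n} \<longrightarrow> x j = 0) \<and> (\<forall>j\<in>{1..n}. 0 \<le> x j) \<and>
      (\<forall>i\<in>{1..m}. (\<Sum>j\<in>{1..n}. real_of_int (A i j) * x j) \<ge> real_of_int (b i))}"

definition conv_hull :: "(nat \<Rightarrow> real) set \<Rightarrow> (nat \<Rightarrow> real) set" where
  "conv_hull S = {x. \<exists>P w. finite P \<and> P \<noteq> {} \<and> P \<subseteq> S \<and> (\<forall>q\<in>P. 0 \<le> w q) \<and> sum w P = 1 \<and>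
                       (\<forall>j. x j = (\<Sum>q\<in>P. w q * q j))}"

definition Qint_hull :: "nat \<Rightarrow> nat \<Rightarrow> (nat \<Rightarrow> nat \<Rightarrow> int) \<Rightarrow> (nat \<Rightarrow> int) \<Rightarrow> (nat \<Rightarrow> real) set" where
  "Qint_hull m n A b = conv_hull (Qpoly m n A b \<inter> {x. \<forall>j. x j \<in> \<int>})"

text \<open>Arcs of D(A): F i is the forward arc a_i, R i the reverse arc (bar a_i),
for i in {1..m+n}; indices i <= m are row arcs, i = m + j are short arcs.
Nodes are the labels mod n, represented in {0..<n}.\<close>

datatype arc = F nat | R nat

fun arc_idx :: "arc \<Rightarrow> nat" where
  "arc_idx (F i) = i" | "arc_idx (R i) = i"

fun is_rev :: "arc \<Rightarrow> bool" where
  "is_rev (F i) = False" | "is_rev (R i) = True"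

definition fwd_tail :: "nat \<Rightarrow> nat \<Rightarrow> (nat \<Rightarrow> int) \<Rightarrow> (nat \<Rightarrow> int) \<Rightarrow> nat \<Rightarrow> int" where
  "fwd_tail m n l k i = (if i \<le> m then (l i - 1) mod int n else (int (i - m) - 1) mod int n)"

definition fwd_head :: "nat \<Rightarrow> nat \<Rightarrow> (nat \<Rightarrow> int) \<Rightarrow> (nat \<Rightarrow> int) \<Rightarrow> nat \<Rightarrow> int" where
  "fwd_head m n l k i = (if i \<le> m then (l i + k i - 1) mod int n else int (i - m) mod int n)"

definition fwd_len :: "nat \<Rightarrow> (nat \<Rightarrow> int) \<Rightarrow> nat \<Rightarrow> int" where
  "fwd_len m k i = (if i \<le> m then k i else 1)"

fun arc_tail :: "nat \<Rightarrow> nat \<Rightarrow> (nat \<Rightarrow> int) \<Rightarrow> (nat \<Rightarrow> int) \<Rightarrow> arc \<Rightarrow> int" where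
  "arc_tail m n l k (F i) = fwd_tail m n l k i"
| "arc_tail m n l k (R i) = fwd_head m n l k i"

fun arc_head :: "nat \<Rightarrow> nat \<Rightarrow> (nat \<Rightarrow> int) \<Rightarrow> (nat \<Rightarrow> int) \<Rightarrow> arc \<Rightarrow> int" where
  "arc_head m n l k (F i) = fwd_head m n l k i"
| "arc_head m n l k (R i) = fwd_tail m n l k i"

fun arc_len :: "nat \<Rightarrow> (nat \<Rightarrow> int) \<Rightarrow> arc \<Rightarrow> int" where
  "arc_len m k (F i) = fwd_len m k i"
| "arc_len m k (R i) = - fwd_len m k i"

definition valid_arc :: "nat \<Rightarrow> nat \<Rightarrow> arc \<Rightarrow> bool" where
  "valid_arc m n a \<longleftrightarrow> arc_idx a \<in> {1..m+n}"

definition jumps :: "nat \<Rightarrow> nat \<Rightarrow> (nat \<Rightarrow> int) \<Rightarrow> (nat \<Rightarrow> int) \<Rightarrow> arc \<Rightarrow> nat \<Rightarrow> bool" where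
  "jumps m n l k a j \<longleftrightarrow>
     (if arc_idx a \<le> m then in_circ_interval n (l (arc_idx a)) (k (arc_idx a)) (int j)
      else arc_idx a - m = j)"

text \<open>A (simple directed) circuit, given as the cyclic list of its arcs; E(Gamma) = set es.\<close>

definition is_circuit :: "nat \<Rightarrow> nat \<Rightarrow> (nat \<Rightarrow> int) \<Rightarrow> (nat \<Rightarrow> int) \<Rightarrow> arc list \<Rightarrow> bool" where
  "is_circuit m n l k es \<longleftrightarrow> es \<noteq> [] \<and> (\<forall>a\<in>set es. valid_arc m n a) \<and>
     (\<forall>t<length es. arc_head m n l k (es ! t) = arc_tail m n l k (es ! ((t + 1) mod length es))) \<and>
     distinct (map (arc_tail m n l k) es)"

text \<open>Winding number: p * n = sum of arc lengths.\<close>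

definition winding :: "nat \<Rightarrow> nat \<Rightarrow> (nat \<Rightarrow> int) \<Rightarrow> arc list \<Rightarrow> int" where
  "winding m n k es = (\<Sum>a\<in>set es. arc_len m k a) div int n"

definition p_minus :: "nat \<Rightarrow> nat \<Rightarrow> (nat \<Rightarrow> int) \<Rightarrow> (nat \<Rightarrow> int) \<Rightarrow> arc list \<Rightarrow> nat \<Rightarrow> nat" where
  "p_minus m n l k es j = card {a\<in>set es. is_rev a \<and> jumps m n l k a j}"

definition t_val :: "nat \<Rightarrow> (nat \<Rightarrow> int) \<Rightarrow> arc list \<Rightarrow> int" where
  "t_val m b es = (\<Sum>i\<in>{i\<in>{1..m}. F i \<in> set es}. b i) - (\<Sum>i\<in>{i\<in>{1..m}. R i \<in> set es}. b i)"

definition beta_val :: "nat \<Rightarrow> nat \<Rightarrow> (nat \<Rightarrow> int) \<Rightarrow> (nat \<Rightarrow> int) \<Rightarrow> arc list \<Rightarrow> int" where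
  "beta_val m n k b es = \<lfloor>real_of_int (t_val m b es) / real_of_int (winding m n k es)\<rfloor>"

definition r_val :: "nat \<Rightarrow> nat \<Rightarrow> (nat \<Rightarrow> int) \<Rightarrow> (nat \<Rightarrow> int) \<Rightarrow> arc list \<Rightarrow> int" where
  "r_val m n k b es = t_val m b es - beta_val m n k b es * winding m n k es"

end

theory Submission
  imports Defs
begin

text \<open>Let \<open>x\<close> be an integral point of \<open>Q(A,b)\<close> and let the weight of an arc be the sum of
  the \<open>x\<^sub>j\<close> it jumps over; a row arc and its reverse both have weight at least \<open>b\<^sub>i\<close>.
  Walking once around \<open>\<Gamma>\<close>, every node \<open>j\<close> is jumped over \<open>p(\<Gamma>)\<close> times more often by
  forward than by reverse arcs, so with \<open>Y = \<Sum> p\<^sup>-(\<Gamma>,j) x\<^sub>j\<close> and \<open>T = \<Sum> x\<^sub>j\<close> the reverse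
  arcs of \<open>\<Gamma>\<close> have total weight \<open>Y\<close> and the forward arcs \<open>Y + p T\<close>. Hence
  \<open>\<Sum>\<^sub>R b\<^sub>i \<le> Y\<close> and \<open>t(\<Gamma>,b) + \<Sum>\<^sub>R b\<^sub>i \<le> Y + p T\<close> with \<open>T\<close> an integer, and writing
  \<open>t = \<beta> p + r\<close> the \<open>\<Gamma>\<close>-inequality follows by distinguishing \<open>T > \<beta>\<close> and \<open>T \<le> \<beta>\<close>.
  Validity then passes to the convex hull.\<close>

lemma div_add_diff_div_eq_indicator:
  fixes n L t j :: int
  assumes "0 < n" "0 < L" "L \<le> n"
  shows "(t + L - j) div n - (t - j) div n = (if (j - t - 1) mod n < L then 1 else 0)"
proof -
  define u where "u = (j - t - 1) mod n"
  define q where "q = (j - t - 1) div n"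
  have u: "0 \<le> u" "u < n" unfolding u_def using assms by auto
  have split: "j - t - 1 = u + n * q" unfolding u_def q_def by simp
  have shift: "\<And>x c. (x + n * c) div n = x div n + c" using assms by simp
  have "t - j = (- u - 1) + n * (- q)" using split by (simp add: algebra_simps)
  then have "(t - j) div n = (- u - 1) div n + (- q)" by (simp only: shift)
  also have "(- u - 1) div n = -1"
    using u by (intro int_div_pos_eq[where r = "n - u - 1"]) auto
  finally have low: "(t - j) div n = - 1 - q" by simp
  have "t + L - j = (L - u - 1) + n * (- q)" using split by (simp add: algebra_simps)
  then have high: "(t + L - j) div n = (L - u - 1) div n + (- q)" by (simp only: shift)
  show ?thesis
  proof (cases "u < L")
    case True
    then have "(L - u - 1) div n = 0" using u assms by (intro div_pos_pos_trivial) auto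
    then show ?thesis using low high True u_def by simp
  next
    case False
    then have "(L - u - 1) div n = -1"
      using u assms by (intro int_div_pos_eq[where r = "n + L - u - 1"]) auto
    then show ?thesis using low high False u_def by simp
  qed
qed

lemma sum_lessThan_rotate:
  fixes g :: "nat \<Rightarrow> 'a::comm_monoid_add"
  assumes "0 < N"
  shows "(\<Sum>t<N. g ((t + 1) mod N)) = (\<Sum>t<N. g t)"
proof -
  obtain M where M: "N = Suc M" using assms by (cases N) auto
  have "(\<Sum>t<Suc M. g ((t + 1) mod Suc M)) = (\<Sum>t<M. g ((t + 1) mod Suc M)) + g 0"
    by simp
  also have "(\<Sum>t<M. g ((t + 1) mod Suc M)) = (\<Sum>t<M. g (Suc t))"
    by (rule sum.cong) auto
  also have "(\<Sum>t<M. g (Suc t)) + g 0 = (\<Sum>t<Suc M. g t)"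
    unfolding sum.lessThan_Suc_shift by (rule add.commute)
  finally show ?thesis using M by simp
qed

text \<open>A closed walk on \<open>\<int>/n\<close> with steps \<open>len t\<close> from positions \<open>pos t\<close>: its total length is
  \<open>n\<close> times the number of net passes over any fixed residue \<open>j\<close>.\<close>

lemma closed_walk_length_eq:
  fixes pos len :: "nat \<Rightarrow> int" and n :: int
  assumes n: "0 < n" and N: "0 < N"
    and closed: "\<forall>t<N. (pos t + len t) mod n = pos ((t + 1) mod N)"
  shows "(\<Sum>t<N. len t) = n * (\<Sum>t<N. (pos t + len t - j) div n - (pos t - j) div n)"
proof -
  define w where "w t = (pos t + len t) div n" for t
  define g where "g v = (v - j) div n" for v
  have step: "pos t + len t = pos ((t + 1) mod N) + n * w t" if "t < N" for t
    using closed that unfolding w_def by (metis mod_mult_div_eq mult.commute add.commute)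
  have rotate: "(\<Sum>t<N. f (pos ((t + 1) mod N))) = (\<Sum>t<N. f (pos t))" for f :: "int \<Rightarrow> int"
    using sum_lessThan_rotate[OF N, of "\<lambda>t. f (pos t)"] by simp
  have "(\<Sum>t<N. len t) = (\<Sum>t<N. pos ((t + 1) mod N) - pos t + n * w t)"
    using step by (intro sum.cong) (auto simp: algebra_simps)
  also have "\<dots> = n * (\<Sum>t<N. w t)"
    using rotate[of id] by (simp add: sum.distrib sum_subtractf sum_distrib_left)
  also have "(\<Sum>t<N. w t) = (\<Sum>t<N. w t + (g (pos ((t + 1) mod N)) - g (pos t)))"
    using rotate[of g] by (simp add: sum.distrib sum_subtractf)
  also have "\<dots> = (\<Sum>t<N. (pos t + len t - j) div n - (pos t - j) div n)"
  proof (rule sum.cong)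
    fix t assume "t \<in> {..<N}"
    then have "(pos t + len t - j) div n = ((pos ((t + 1) mod N) - j) + n * w t) div n"
      using step by (simp add: algebra_simps)
    also have "\<dots> = g (pos ((t + 1) mod N)) + w t" unfolding g_def using n by simp
    finally show "w t + (g (pos ((t + 1) mod N)) - g (pos t)) = (pos t + len t - j) div n - (pos t - j) div n"
      by (simp add: g_def)
  qed simp
  finally show ?thesis .
qed

lemma fwd_len_bounds:
  assumes "0 < n" "circular_data m n l k" "i \<in> {1..m+n}"
  shows "0 < fwd_len m k i" "fwd_len m k i \<le> int n"
proof -
  have "i \<le> m \<Longrightarrow> 2 \<le> k i \<and> k i \<le> int n - 1"
    using assms(2,3) unfolding circular_data_def by auto
  then show "0 < fwd_len m k i" "fwd_len m k i \<le> int n"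
    using assms(1) by (auto simp: fwd_len_def)
qed

lemma fwd_head_eq_mod: "fwd_head m n l k i = (fwd_tail m n l k i + fwd_len m k i) mod int n"
proof (cases "i \<le> m")
  case True
  have "((l i - 1) mod int n + k i) mod int n = (l i - 1 + k i) mod int n"
    by (rule mod_add_left_eq)
  then show ?thesis using True by (simp add: fwd_head_def fwd_tail_def fwd_len_def algebra_simps)
next
  case False
  have "((int (i - m) - 1) mod int n + 1) mod int n = int (i - m) mod int n"
    by (simp add: mod_add_left_eq)
  then show ?thesis using False by (simp add: fwd_head_def fwd_tail_def fwd_len_def)
qed

lemma arc_head_eq_mod: "arc_head m n l k a = (arc_tail m n l k a + arc_len m k a) mod int n"
proof (cases a)
  case (R i)
  have "fwd_tail m n l k i = fwd_tail m n l k i mod int n" by (simp add: fwd_tail_def)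
  then show ?thesis using R fwd_head_eq_mod[of m n l k i] by (simp add: mod_diff_left_eq)
qed (simp add: fwd_head_eq_mod)

lemma jumps_R_iff: "jumps m n l k (R i) j \<longleftrightarrow> jumps m n l k (F i) j"
  by (simp add: jumps_def)

lemma jumps_F_iff:
  assumes i: "i \<in> {1..m+n}" and j: "j \<in> {1..n}"
  shows "jumps m n l k (F i) j \<longleftrightarrow> (int j - fwd_tail m n l k i - 1) mod int n < fwd_len m k i"
proof (cases "i \<le> m")
  case True
  have "(int j - (l i - 1) mod int n - 1) mod int n = ((int j - 1) - (l i - 1) mod int n) mod int n"
    by (simp add: algebra_simps)
  also have "\<dots> = (int j - l i) mod int n" by (simp add: mod_diff_right_eq)
  finally have "(int j - (l i - 1) mod int n - 1) mod int n = (int j - l i) mod int n" .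
  then show ?thesis using True by (simp add: jumps_def fwd_tail_def fwd_len_def in_circ_interval_def)
next
  case False
  define j0 where "j0 = i - m"
  have j0: "1 \<le> j0" "j0 \<le> n" using False i j0_def by auto
  have "(int j - (int j0 - 1) mod int n - 1) mod int n = ((int j - 1) - (int j0 - 1) mod int n) mod int n"
    by (simp add: algebra_simps)
  also have "\<dots> = (int j - int j0) mod int n" by (simp add: mod_diff_right_eq)
  finally have "(int j - (int j0 - 1) mod int n - 1) mod int n = (int j - int j0) mod int n" .
  moreover have "(int j - int j0) mod int n < 1 \<longleftrightarrow> j = j0"
  proof (cases "j0 \<le> j")
    case True
    then have "(int j - int j0) mod int n = int j - int j0" using j j0 by (intro mod_pos_pos_trivial) auto
    then show ?thesis using True by auto
  next
    case False
    then have "(int j - int j0) mod int n = int j - int j0 + int n"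
      using j j0 by (intro int_mod_pos_eq[where q = "-1"]) auto
    then show ?thesis using False j j0 by auto
  qed
  ultimately show ?thesis using False j0_def by (auto simp: jumps_def fwd_tail_def fwd_len_def)
qed

text \<open>Read on the integers, an arc from \<open>tail\<close> to \<open>tail + len\<close> passes a representative of
  \<open>j\<close> exactly when it jumps over \<open>j\<close>, upwards for forward and downwards for reverse arcs.\<close>

lemma arc_passes_eq_signed_jump:
  assumes n: "0 < n" and cd: "circular_data m n l k" and a: "valid_arc m n a" and j: "j \<in> {1..n}"
  shows "(arc_tail m n l k a + arc_len m k a - int j) div int n - (arc_tail m n l k a - int j) div int n
        = (if jumps m n l k a j then (if is_rev a then -1 else 1) else 0)"
proof -
  obtain i where i: "i \<in> {1..m+n}" "a = F i \<or> a = R i"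
    using a unfolding valid_arc_def by (cases a) auto
  define t where "t = fwd_tail m n l k i"
  define L where "L = fwd_len m k i"
  have count: "(s + L - int j) div int n - (s - int j) div int n
      = (if (int j - s - 1) mod int n < L then 1 else 0)" for s
    using div_add_diff_div_eq_indicator[of "int n" L] fwd_len_bounds[OF n cd i(1)] n L_def by simp
  show ?thesis
    using i(2)
  proof
    assume "a = F i"
    then show ?thesis using count[of t] jumps_F_iff[OF i(1) j] t_def L_def by simp
  next
    assume aR: "a = R i"
    define h where "h = fwd_head m n l k i"
    have "(int j - (h - L) - 1) mod int n = ((int j + L - 1) - (t + L) mod int n) mod int n"
      using fwd_head_eq_mod[of m n l k i] h_def L_def t_def by (simp add: algebra_simps)
    also have "\<dots> = ((int j + L - 1) - (t + L)) mod int n" by (rule mod_diff_right_eq)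
    also have "(int j + L - 1) - (t + L) = int j - t - 1" by simp
    finally have "(int j - (h - L) - 1) mod int n = (int j - t - 1) mod int n" .
    then show ?thesis
      using count[of "h - L"] aR jumps_R_iff jumps_F_iff[OF i(1) j] h_def L_def t_def
      by (auto simp: algebra_simps)
  qed
qed

lemma winding_eq_card_fwd_jumps_minus_p_minus:
  assumes n: "0 < n" and cd: "circular_data m n l k" and ci: "is_circuit m n l k es"
    and j: "j \<in> {1..n}"
  shows "winding m n k es
      = int (card {a\<in>set es. \<not> is_rev a \<and> jumps m n l k a j}) - int (p_minus m n l k es j)"
proof -
  define N where "N = length es"
  define pos where "pos t = arc_tail m n l k (es ! t)" for t
  define len where "len t = arc_len m k (es ! t)" for t
  define sgn where "sgn a = (if jumps m n l k a j then if is_rev a then -1 else 1 else (0::int))" for a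
  have N: "0 < N" and valid: "\<And>t. t < N \<Longrightarrow> valid_arc m n (es ! t)" and "distinct es"
    using ci unfolding is_circuit_def N_def by (auto simp: distinct_map)
  have closed: "\<forall>t<N. (pos t + len t) mod int n = pos ((t + 1) mod N)"
    using ci arc_head_eq_mod[of m n l k] unfolding is_circuit_def N_def pos_def len_def by metis
  have by_index: "(\<Sum>a\<in>set es. f a) = (\<Sum>t<N. f (es ! t))" for f :: "arc \<Rightarrow> int"
    using \<open>distinct es\<close> by (simp add: sum_list_distinct_conv_sum_set[symmetric] sum_list_sum_nth
        N_def atLeast0LessThan)
  have "(\<Sum>t<N. len t) = int n * (\<Sum>t<N. sgn (es ! t))"
    using closed_walk_length_eq[OF _ N closed, of "int j"] n arc_passes_eq_signed_jump[OF n cd valid j]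
    unfolding pos_def len_def sgn_def by simp
  then have "winding m n k es = (\<Sum>a\<in>set es. sgn a)"
    using n by (simp add: winding_def by_index len_def)
  also have "\<dots> = (\<Sum>a\<in>set es. (if \<not> is_rev a \<and> jumps m n l k a j then 1 else 0)
      - (if is_rev a \<and> jumps m n l k a j then 1 else 0))"
    unfolding sgn_def by (intro sum.cong) auto
  finally show ?thesis
    by (simp add: sum_subtractf sum.inter_filter[symmetric] p_minus_def)
qed

definition jump_weight :: "nat \<Rightarrow> nat \<Rightarrow> (nat \<Rightarrow> int) \<Rightarrow> (nat \<Rightarrow> int) \<Rightarrow> (nat \<Rightarrow> real) \<Rightarrow> arc \<Rightarrow> real" where
  "jump_weight m n l k x a = (\<Sum>j\<in>{1..n}. if jumps m n l k a j then x j else 0)"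

lemma sum_jump_weight:
  assumes "finite A"
  shows "(\<Sum>a\<in>{a\<in>A. Q a}. jump_weight m n l k x a)
      = (\<Sum>j\<in>{1..n}. real (card {a\<in>A. Q a \<and> jumps m n l k a j}) * x j)"
proof -
  have "(\<Sum>a\<in>{a\<in>A. Q a}. jump_weight m n l k x a)
      = (\<Sum>j\<in>{1..n}. \<Sum>a\<in>{a\<in>A. Q a}. if jumps m n l k a j then x j else 0)"
    unfolding jump_weight_def by (rule sum.swap)
  also have "\<dots> = (\<Sum>j\<in>{1..n}. real (card {a\<in>{a\<in>A. Q a}. jumps m n l k a j}) * x j)"
    using assms by (simp add: sum.inter_filter[symmetric])
  also have "\<dots> = (\<Sum>j\<in>{1..n}. real (card {a\<in>A. Q a \<and> jumps m n l k a j}) * x j)"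
    by (simp add: Collect_conj_eq Int_assoc)
  finally show ?thesis .
qed

lemma jump_weight_nonneg: "x \<in> Qpoly m n A b \<Longrightarrow> 0 \<le> jump_weight m n l k x a"
  unfolding jump_weight_def Qpoly_def by (auto intro: sum_nonneg)

lemma row_bound_le_jump_weight:
  assumes "x \<in> Qpoly m n (circ_matrix n l k) b" "i \<in> {1..m}" "a \<in> {F i, R i}"
  shows "real_of_int (b i) \<le> jump_weight m n l k x a"
proof -
  have "jump_weight m n l k x a = (\<Sum>j\<in>{1..n}. real_of_int (circ_matrix n l k i j) * x j)"
    unfolding jump_weight_def using assms(2,3)
    by (intro sum.cong) (auto simp: circ_matrix_def jumps_def)
  then show ?thesis using assms(1,2) unfolding Qpoly_def by auto
qed

lemma sum_row_bounds_le_sum_jump_weight: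
  assumes x: "x \<in> Qpoly m n (circ_matrix n l k) b"
    and C: "\<And>i. C i \<in> {F i, R i}" and P: "\<And>i. C i \<in> set es \<Longrightarrow> P (C i)"
  shows "(\<Sum>i\<in>{i\<in>{1..m}. C i \<in> set es}. real_of_int (b i))
      \<le> (\<Sum>a\<in>{a\<in>set es. P a}. jump_weight m n l k x a)"
proof -
  have "arc_idx (C i) = i" for i using C[of i] by auto
  then have "inj C" by (metis injI)
  have "(\<Sum>i\<in>{i\<in>{1..m}. C i \<in> set es}. real_of_int (b i))
      \<le> (\<Sum>i\<in>{i\<in>{1..m}. C i \<in> set es}. jump_weight m n l k x (C i))"
    by (intro sum_mono row_bound_le_jump_weight[OF x] C) simp
  also have "\<dots> = (\<Sum>a\<in>C ` {i\<in>{1..m}. C i \<in> set es}. jump_weight m n l k x a)"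
    using \<open>inj C\<close> by (simp add: sum.reindex inj_on_subset)
  also have "\<dots> \<le> (\<Sum>a\<in>{a\<in>set es. P a}. jump_weight m n l k x a)"
    by (intro sum_mono2 jump_weight_nonneg[OF x]) (auto intro: P)
  finally show ?thesis .
qed

lemma beta_val_eq_div: "beta_val m n k b es = t_val m b es div winding m n k es"
  unfolding beta_val_def by (rule floor_divide_of_int_eq)

lemma r_val_eq_mod: "r_val m n k b es = t_val m b es mod winding m n k es"
  unfolding r_val_def beta_val_eq_div by (simp add: minus_div_mult_eq_mod)

lemma remainder_rounding:
  fixes Y BR BF :: real and p \<beta> r T :: int
  assumes "BR \<le> Y" "BF \<le> Y + of_int p * of_int T" "BF - BR = of_int (\<beta> * p + r)"
    "0 \<le> r" "r \<le> p"
  shows "of_int (r * (\<beta> + 1)) + BR \<le> Y + of_int r * of_int T"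
proof (cases "\<beta> + 1 \<le> T")
  case True
  then have "r * (\<beta> + 1) \<le> r * T" using assms(4) by (rule mult_left_mono)
  then have "(of_int (r * (\<beta> + 1)) :: real) \<le> of_int r * of_int T" by (simp flip: of_int_mult)
  then show ?thesis using assms(1) by simp
next
  case False
  have "0 \<le> (p - r) * (\<beta> - T)" using False assms(5) by (intro mult_nonneg_nonneg) auto
  then have "r * (\<beta> + 1) \<le> (\<beta> * p + r) - p * T + r * T" by (simp add: algebra_simps)
  then have "(of_int (r * (\<beta> + 1)) :: real) \<le> of_int (\<beta> * p + r) - of_int p * of_int T + of_int r * of_int T"
    by (simp only: of_int_le_iff[symmetric, where 'a = real]) simp
  then show ?thesis using assms(2,3) by simp
qed

lemma gamma_ineq_integral_point:
  assumes n: "0 < n" and cd: "circular_data m n l k" and ci: "is_circuit m n l k es"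
    and p: "winding m n k es > 0"
    and x: "x \<in> Qpoly m n (circ_matrix n l k) b" and x_int: "\<forall>j. x j \<in> \<int>"
  shows "(\<Sum>j\<in>{1..n}. real_of_int (int (p_minus m n l k es j) + r_val m n k b es) * x j)
       \<ge> real_of_int (r_val m n k b es * (beta_val m n k b es + 1)
                      + (\<Sum>i\<in>{i\<in>{1..m}. R i \<in> set es}. b i))"
proof -
  define p where "p = winding m n k es"
  define Y where "Y = (\<Sum>j\<in>{1..n}. real (p_minus m n l k es j) * x j)"
  define BF where "BF = (\<Sum>i\<in>{i\<in>{1..m}. F i \<in> set es}. b i)"
  define BR where "BR = (\<Sum>i\<in>{i\<in>{1..m}. R i \<in> set es}. b i)"
  obtain T where T: "(\<Sum>j\<in>{1..n}. x j) = of_int T"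
    using x_int by (metis Ints_cases Ints_sum)
  have "real_of_int BR \<le> (\<Sum>a\<in>{a\<in>set es. is_rev a}. jump_weight m n l k x a)"
    using sum_row_bounds_le_sum_jump_weight[OF x, where C = R and P = is_rev] unfolding BR_def by simp
  also have "\<dots> = Y"
    unfolding Y_def p_minus_def by (simp add: sum_jump_weight)
  finally have BR_le: "real_of_int BR \<le> Y" .
  have "real_of_int BF \<le> (\<Sum>a\<in>{a\<in>set es. \<not> is_rev a}. jump_weight m n l k x a)"
    using sum_row_bounds_le_sum_jump_weight[OF x, where C = F and P = "\<lambda>a. \<not> is_rev a"] unfolding BF_def by simp
  also have "\<dots> = (\<Sum>j\<in>{1..n}. (real (p_minus m n l k es j) + of_int p) * x j)"
    unfolding sum_jump_weight[OF finite_set]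
  proof (rule sum.cong)
    fix j assume "j \<in> {1..n}"
    then have "int (card {a\<in>set es. \<not> is_rev a \<and> jumps m n l k a j}) = int (p_minus m n l k es j) + p"
      using winding_eq_card_fwd_jumps_minus_p_minus[OF n cd ci] unfolding p_def by simp
    then have "real (card {a\<in>set es. \<not> is_rev a \<and> jumps m n l k a j}) = real (p_minus m n l k es j) + of_int p"
      using arg_cong[where f = "of_int :: int \<Rightarrow> real"] by fastforce
    then show "real (card {a\<in>set es. \<not> is_rev a \<and> jumps m n l k a j}) * x j
        = (real (p_minus m n l k es j) + of_int p) * x j" by simp
  qed simp
  also have "\<dots> = Y + of_int p * of_int T"
    unfolding Y_def T[symmetric] by (simp add: algebra_simps sum.distrib sum_distrib_left)
  finally have BF_le: "real_of_int BF \<le> Y + of_int p * of_int T" .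
  have t: "t_val m b es = BF - BR" unfolding t_val_def BF_def BR_def ..
  have "of_int ((BF - BR) mod p * ((BF - BR) div p + 1)) + real_of_int BR
      \<le> Y + of_int ((BF - BR) mod p) * of_int T"
    using p unfolding p_def[symmetric]
    by (intro remainder_rounding[OF BR_le BF_le]) (simp_all add: order_less_imp_le flip: of_int_diff)
  then show ?thesis
    unfolding r_val_eq_mod beta_val_eq_div t p_def[symmetric] BR_def[symmetric]
    by (simp add: Y_def T[symmetric] algebra_simps sum.distrib sum_distrib_left sum_distrib_right)
qed

lemma conv_hull_valid_ineq:
  fixes c :: "nat \<Rightarrow> real"
  assumes "x \<in> conv_hull S" "\<And>y. y \<in> S \<Longrightarrow> d \<le> (\<Sum>j\<in>J. c j * y j)"
  shows "d \<le> (\<Sum>j\<in>J. c j * x j)"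
proof -
  obtain P w where P: "finite P" "P \<subseteq> S" "\<forall>q\<in>P. 0 \<le> w q" "sum w P = 1"
    "\<forall>j. x j = (\<Sum>q\<in>P. w q * q j)"
    using assms(1) unfolding conv_hull_def by blast
  have "d = (\<Sum>q\<in>P. w q * d)" using P(4) by (simp flip: sum_distrib_right)
  also have "\<dots> \<le> (\<Sum>q\<in>P. w q * (\<Sum>j\<in>J. c j * q j))"
    using P(2,3) assms(2) by (intro sum_mono mult_left_mono) auto
  also have "\<dots> = (\<Sum>j\<in>J. \<Sum>q\<in>P. c j * (w q * q j))"
    by (subst sum.swap) (simp add: sum_distrib_left mult.left_commute)
  also have "\<dots> = (\<Sum>j\<in>J. c j * x j)" using P(5) by (simp add: sum_distrib_left)
  finally show ?thesis .
qed

theorem theorem4p5: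
  fixes m n :: nat and l k b :: "nat \<Rightarrow> int" and es :: "arc list"
  assumes "0 < n"
    and "circular_data m n l k"
    and "\<forall>i\<in>{1..m}. 0 \<le> b i"
    and "is_circuit m n l k es"
    and "winding m n k es > 0"
  shows "\<forall>x\<in>Qint_hull m n (circ_matrix n l k) b.
     (\<Sum>j\<in>{1..n}. real_of_int (int (p_minus m n l k es j) + r_val m n k b es) * x j)
       \<ge> real_of_int (r_val m n k b es * (beta_val m n k b es + 1)
                      + (\<Sum>i\<in>{i\<in>{1..m}. R i \<in> set es}. b i))"
proof
  fix x assume "x \<in> Qint_hull m n (circ_matrix n l k) b"
  then show "(\<Sum>j\<in>{1..n}. real_of_int (int (p_minus m n l k es j) + r_val m n k b es) * x j)
       \<ge> real_of_int (r_val m n k b es * (beta_val m n k b es + 1)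
                      + (\<Sum>i\<in>{i\<in>{1..m}. R i \<in> set es}. b i))"
    unfolding Qint_hull_def
    by (rule conv_hull_valid_ineq) (use gamma_ineq_integral_point[OF assms(1,2,4,5)] in blast)
qed

end
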